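(* Let $P$ and $Q$ be arbitrary distributions on $\mathcal{X}$ with densities, let $\varepsilon>0$, and let $\tau=\max\{\int_{\mathcal{X}}\max\{P(x)-e^{\varepsilon}Q(x),0\}\mathrm{d}x,\ \int_{\mathcal{X}}\max\{Q(x)-e^{\varepsilon}P(x),0\}\mathrm{d}x\}$. Assume $\tau=\int_{\mathcal{X}}\max\{P(x)-e^{\varepsilon}Q(x),0\}\mathrm{d}x$. Then there exists $\varepsilon'\in[0,\varepsilon]$ such that $\tau=\int_{\mathcal{X}}\max\{Q(x)-e^{\varepsilon'}P(x),0\}\mathrm{d}x$. *)

theory Defs
  imports "HOL-Analysis.Analysis"
begin

end

theory Submission
  imports Defs
begin

text \<open>Write \<open>E(\<gamma>) = \<integral> max (Q - \<gamma> P) 0\<close> (the hockey-stick divergence of \<open>Q\<close> from \<open>P\<close>).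
  It is Lipschitz in \<open>\<gamma>\<close> with constant \<open>\<integral>P = 1\<close>. At \<open>\<gamma> = exp \<epsilon>\<close> it is at most \<open>\<tau>\<close>, while at
  \<open>\<gamma> = 1\<close> it is the total variation distance, which is symmetric in \<open>P, Q\<close> and hence at least
  \<open>\<integral> max (P - exp \<epsilon> Q) 0 = \<tau>\<close>. The intermediate value theorem for \<open>\<epsilon>' \<mapsto> E(exp \<epsilon>')\<close> on
  \<open>[0, \<epsilon>]\<close> finishes the proof.\<close>

definition hockey_stick :: "'a measure \<Rightarrow> ('a \<Rightarrow> real) \<Rightarrow> ('a \<Rightarrow> real) \<Rightarrow> real \<Rightarrow> real" where
  "hockey_stick M Q P \<gamma> = (\<integral>x. max (Q x - \<gamma> * P x) 0 \<partial>M)"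

lemma integrable_hockey_stick_integrand:
  fixes Q P :: "'a \<Rightarrow> real"
  assumes "integrable M Q" "integrable M P"
  shows "integrable M (\<lambda>x. max (Q x - \<gamma> * P x) 0)"
  using assms by auto

lemma hockey_stick_lipschitz:
  assumes Q_int: "integrable M Q" and P_int: "integrable M P"
    and P_nonneg: "\<And>x. x \<in> space M \<Longrightarrow> P x \<ge> 0"
  shows "(\<integral>x. P x \<partial>M)-lipschitz_on UNIV (hockey_stick M Q P)"
proof (rule lipschitz_onI)
  fix a b :: real
  have "\<bar>hockey_stick M Q P a - hockey_stick M Q P b\<bar>
      = \<bar>\<integral>x. max (Q x - a * P x) 0 - max (Q x - b * P x) 0 \<partial>M\<bar>"
    unfolding hockey_stick_def using assms
    by (simp add: Bochner_Integration.integral_diff integrable_hockey_stick_integrand)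
  also have "\<dots> \<le> (\<integral>x. \<bar>max (Q x - a * P x) 0 - max (Q x - b * P x) 0\<bar> \<partial>M)"
    by (rule integral_abs_bound)
  also have "\<dots> \<le> (\<integral>x. \<bar>a - b\<bar> * P x \<partial>M)"
  proof (rule integral_mono)
    fix x assume "x \<in> space M"
    then have "\<bar>a * P x - b * P x\<bar> = \<bar>a - b\<bar> * P x"
      using P_nonneg by (simp add: abs_mult left_diff_distrib[symmetric])
    then show "\<bar>max (Q x - a * P x) 0 - max (Q x - b * P x) 0\<bar> \<le> \<bar>a - b\<bar> * P x"
      by (simp add: max_def abs_if split: if_splits)
  qed (use assms in auto)
  finally show "dist (hockey_stick M Q P a) (hockey_stick M Q P b) \<le> (\<integral>x. P x \<partial>M) * dist a b"
    by (simp add: dist_real_def mult.commute)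
qed (use assms in \<open>auto intro: integral_nonneg_AE\<close>)

lemma continuous_on_hockey_stick:
  assumes "integrable M Q" "integrable M P" "\<And>x. x \<in> space M \<Longrightarrow> P x \<ge> 0"
  shows "continuous_on A (hockey_stick M Q P)"
  using lipschitz_on_continuous_on[OF hockey_stick_lipschitz[OF assms]]
  by (rule continuous_on_subset) auto

lemma hockey_stick_antimono:
  assumes "integrable M Q" "integrable M P" "\<And>x. x \<in> space M \<Longrightarrow> P x \<ge> 0" "\<gamma> \<le> \<delta>"
  shows "hockey_stick M Q P \<delta> \<le> hockey_stick M Q P \<gamma>"
  unfolding hockey_stick_def
proof (rule integral_mono)
  fix x assume "x \<in> space M"
  then have "\<gamma> * P x \<le> \<delta> * P x"
    using assms by (simp add: mult_right_mono)
  then show "max (Q x - \<delta> * P x) 0 \<le> max (Q x - \<gamma> * P x) 0" by simp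
qed (use assms in auto)

text \<open>\<open>E\<^sub>1\<close> is the total variation distance, which is symmetric when the masses agree, since
  \<open>max (P - Q) 0 - max (Q - P) 0 = P - Q\<close> pointwise.\<close>

lemma hockey_stick_one_commute:
  assumes "integrable M P" "integrable M Q" "(\<integral>x. P x \<partial>M) = (\<integral>x. Q x \<partial>M)"
  shows "hockey_stick M P Q 1 = hockey_stick M Q P 1"
proof -
  have "hockey_stick M P Q 1 - hockey_stick M Q P 1
      = (\<integral>x. max (P x - Q x) 0 - max (Q x - P x) 0 \<partial>M)"
    unfolding hockey_stick_def using assms by (simp add: Bochner_Integration.integral_diff)
  also have "\<dots> = (\<integral>x. P x - Q x \<partial>M)"
    by (rule Bochner_Integration.integral_cong) (auto simp: max_def)
  also have "\<dots> = 0"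
    using assms by (simp add: Bochner_Integration.integral_diff)
  finally show ?thesis by simp
qed

theorem lemmaB1:
  fixes M :: "'a measure" and P Q :: "'a \<Rightarrow> real" and \<epsilon> \<tau> :: real
  assumes P_meas: "P \<in> borel_measurable M" and P_nonneg: "\<And>x. x \<in> space M \<Longrightarrow> P x \<ge> 0"
      and P_int: "integrable M P" and P_one: "(\<integral>x. P x \<partial>M) = 1"
      and Q_meas: "Q \<in> borel_measurable M" and Q_nonneg: "\<And>x. x \<in> space M \<Longrightarrow> Q x \<ge> 0"
      and Q_int: "integrable M Q" and Q_one: "(\<integral>x. Q x \<partial>M) = 1"
      and eps_pos: "\<epsilon> > 0"
      and tau_def: "\<tau> = max (\<integral>x. max (P x - exp \<epsilon> * Q x) 0 \<partial>M)
                              (\<integral>x. max (Q x - exp \<epsilon> * P x) 0 \<partial>M)"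
      and tau_eq: "\<tau> = (\<integral>x. max (P x - exp \<epsilon> * Q x) 0 \<partial>M)"
  shows "\<exists>\<epsilon>'. 0 \<le> \<epsilon>' \<and> \<epsilon>' \<le> \<epsilon> \<and> \<tau> = (\<integral>x. max (Q x - exp \<epsilon>' * P x) 0 \<partial>M)"
proof -
  let ?h = "\<lambda>e. hockey_stick M Q P (exp e)"
  have "continuous_on {0..\<epsilon>} ?h"
    by (rule continuous_on_compose2[OF continuous_on_hockey_stick[OF Q_int P_int P_nonneg]])
      (auto intro: continuous_intros)
  moreover have "?h \<epsilon> \<le> \<tau>"
    using tau_def by (simp add: hockey_stick_def)
  moreover have "\<tau> \<le> ?h 0"
  proof -
    have "\<tau> = hockey_stick M P Q (exp \<epsilon>)"
      using tau_eq by (simp add: hockey_stick_def)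
    also have "\<dots> \<le> hockey_stick M P Q 1"
      using eps_pos by (intro hockey_stick_antimono P_int Q_int Q_nonneg) auto
    also have "\<dots> = ?h 0"
      using P_one Q_one by (simp add: hockey_stick_one_commute P_int Q_int)
    finally show ?thesis .
  qed
  ultimately obtain e where "0 \<le> e" "e \<le> \<epsilon>" "?h e = \<tau>"
    using IVT2'[of ?h \<epsilon> \<tau> 0] eps_pos by auto
  then show ?thesis
    by (auto simp: hockey_stick_def)
qed

end
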